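(* Let $\mu\in\Delta_q$ and $\delta\in(0,1]$. Let $\mathcal R(\mu,\delta)$ be the set of seeds $r=((x_1,p_1),(x_2,p_2),\dots)$ such that $p_{i^*}\ge(1-\delta)\mu(x_{i^*})$, where $i^*=\min\{i: p_i\le\mu(x_i)\}$. Then for every $\upsilon\in\Delta_q$, $$\mathbb P_{r\sim\mathcal R(\mu,\delta)}\big[\mathrm{MinCoupler}(\mu,r)\ne\mathrm{MinCoupler}(\upsilon,r)\big]\ge\frac{1-\upsilon_{\max}}{2}\cdot\mathbb P_{x\sim\mu}\big[\upsilon(x)<(1-\delta)\mu(x)\big],$$ where $\upsilon_{\max}=\max_{x\in[q]}\upsilon(x)$ and $r\sim\mathcal R(\mu,\delta)$ denotes a uniformly random seed conditioned on lying in $\mathcal R(\mu,\delta)$.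
   Context: $\Delta_q$ is the probability simplex on $[q]$. A uniformly random seed is an infinite sequence of i.i.d. pairs $(x_k,p_k)$ with $x_k$ uniform on $[q]$ and $p_k$ uniform on $[0,1]$, independent. $\mathrm{MinCoupler}(\nu,r)$ outputs $x_{i^*}$ with $i^*=\min\{k: p_k\le\nu(x_k)\}$. *)

theory Defs
  imports "HOL-Probability.Probability"
begin

definition in_simplex :: "nat \<Rightarrow> (nat \<Rightarrow> real) \<Rightarrow> bool" where
  "in_simplex q \<mu> \<longleftrightarrow> (\<forall>x\<in>{1..q}. 0 \<le> \<mu> x) \<and> (\<Sum>x\<in>{1..q}. \<mu> x) = 1"

type_synonym seed = "nat \<Rightarrow> nat \<times> real"

definition seed_space :: "nat \<Rightarrow> seed measure" where
  "seed_space q = (\<Pi>\<^sub>M k\<in>UNIV. uniform_count_measure {1..q} \<Otimes>\<^sub>M uniform_measure lborel {0..1::real})"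

definition istar :: "(nat \<Rightarrow> real) \<Rightarrow> seed \<Rightarrow> nat" where
  "istar \<nu> r = (LEAST k. snd (r k) \<le> \<nu> (fst (r k)))"

definition MinCoupler :: "(nat \<Rightarrow> real) \<Rightarrow> seed \<Rightarrow> nat" where
  "MinCoupler \<nu> r = fst (r (istar \<nu> r))"

definition Rset :: "(nat \<Rightarrow> real) \<Rightarrow> real \<Rightarrow> seed set" where
  "Rset \<mu> \<delta> = {r. snd (r (istar \<mu> r)) \<ge> (1 - \<delta>) * \<mu> (fst (r (istar \<mu> r)))}"

definition cond_prob :: "'a measure \<Rightarrow> 'a set \<Rightarrow> 'a set \<Rightarrow> real" where
  "cond_prob M A B = measure M (A \<inter> B \<inter> space M) / measure M (B \<inter> space M)"

end

theory Submission
  imports Defs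
begin

text \<open>A seed lies in \<open>R(\<mu>, \<delta>)\<close> only if the first sample accepted by \<open>\<mu>\<close> falls into the top
  \<open>\<delta>\<close>-fraction \<open>[(1 - \<delta>) \<mu>(x), \<mu>(x)]\<close> of its acceptance interval; summing over the position of
  that sample shows \<open>P(R) \<le> \<delta>\<close>. For the lower bound, fix \<open>x\<close> with \<open>\<upsilon>(x) < (1 - \<delta>) \<mu>(x)\<close>
  and consider the cylinder of seeds on which both measures reject the first \<open>i\<close> samples, \<open>\<mu>\<close>
  accepts \<open>x\<close> at sample \<open>i\<close> with \<open>p \<in> [(1 - \<delta>) \<mu>(x), \<mu>(x)]\<close> (so \<open>\<upsilon>\<close> rejects it), \<open>\<upsilon>\<close> rejects
  \<open>d\<close> further samples and then accepts some \<open>y \<noteq> x\<close>. These cylinders are disjoint, lie in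
  \<open>R\<close>, and the two couplings disagree on them. Summing the two geometric series over \<open>i\<close> and
  \<open>d\<close> gives probability \<open>\<delta> \<mu>(x) (1 - \<upsilon>(x)) / \<Sum>\<^sub>y max(\<mu> y, \<upsilon> y) \<ge> \<delta> \<mu>(x) (1 - \<upsilon>(x)) / 2\<close>,
  and dividing by \<open>P(R) \<le> \<delta>\<close> yields the claim.\<close>

definition coord_space :: "nat \<Rightarrow> (nat \<times> real) measure" where
  "coord_space q = uniform_count_measure {1..q} \<Otimes>\<^sub>M uniform_measure lborel {0..1::real}"

lemma seed_space_eq_PiM: "seed_space q = (\<Pi>\<^sub>M k\<in>UNIV. coord_space q)"
  by (simp add: seed_space_def coord_space_def)

lemma prob_space_coord_space: "1 \<le> q \<Longrightarrow> prob_space (coord_space q)"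
  unfolding coord_space_def
  by (intro prob_space_pair prob_space_uniform_count_measure prob_space_uniform_measure) auto

lemma product_prob_space_coord_space: "1 \<le> q \<Longrightarrow> product_prob_space (\<lambda>_. coord_space q)"
  by (simp add: product_prob_space_def product_prob_space_axioms_def product_sigma_finite_def
      prob_space_coord_space prob_space_imp_sigma_finite)

lemma prob_space_seed_space: "1 \<le> q \<Longrightarrow> prob_space (seed_space q)"
  unfolding seed_space_eq_PiM by (intro prob_space_PiM prob_space_coord_space)

lemma sets_coord_space: "sets (coord_space q) = sets (count_space {1..q} \<Otimes>\<^sub>M (lborel::real measure))"
  unfolding coord_space_def by (intro sets_pair_measure_cong) (auto simp: sets_uniform_count_measure)

lemma fst_seed_in_range: "r \<in> space (seed_space q) \<Longrightarrow> fst (r k) \<in> {1..q}"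
  by (auto simp: seed_space_eq_PiM space_PiM coord_space_def space_pair_measure
      space_uniform_count_measure PiE_def Pi_def mem_Times_iff)

lemma Sigma_in_sets_coord_space:
  assumes "Y \<subseteq> {1..q}" "\<And>y. y \<in> Y \<Longrightarrow> I y \<in> sets borel"
  shows "Sigma Y I \<in> sets (coord_space q)"
proof -
  have "Sigma Y I = (\<Union>y\<in>Y. {y} \<times> I y)" by auto
  moreover have "finite Y" using assms(1) finite_subset by blast
  ultimately show ?thesis unfolding sets_coord_space using assms
    by (auto intro!: sets.finite_UN pair_measureI)
qed

lemma measure_coord_space_Sigma:
  assumes q: "1 \<le> q" and Y: "Y \<subseteq> {1..q}" and I: "\<And>y. y \<in> Y \<Longrightarrow> I y \<in> sets borel"
  shows "measure (coord_space q) (Sigma Y I) = (\<Sum>y\<in>Y. measure lborel ({0..1} \<inter> I y)) / q"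
proof -
  interpret C: prob_space "coord_space q" using prob_space_coord_space[OF q] .
  interpret U: prob_space "uniform_measure lborel {0..1::real}" by (rule prob_space_uniform_measure) auto
  have "measure (coord_space q) ({y} \<times> I y) = measure lborel ({0..1} \<inter> I y) / q" if y: "y \<in> Y" for y
  proof -
    have "emeasure (uniform_count_measure {1..q}) {y} = ennreal (1 / q)"
      using emeasure_uniform_count_measure[of "{1..q}" "{y}"] y Y q
      by (auto simp: ennreal_of_nat_eq_real_of_nat divide_ennreal)
    moreover have "emeasure lborel ({0..1} \<inter> I y) \<le> emeasure lborel {0..1::real}"
      by (rule emeasure_mono) auto
    then have "emeasure (uniform_measure lborel {0..1::real}) (I y) = ennreal (measure lborel ({0..1} \<inter> I y))"
      using y I by (simp add: emeasure_eq_ennreal_measure top_unique)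
    ultimately have "emeasure (coord_space q) ({y} \<times> I y) = ennreal (1 / q) * ennreal (measure lborel ({0..1} \<inter> I y))"
      unfolding coord_space_def using y Y I
      by (subst U.emeasure_pair_measure_Times) (auto simp: sets_uniform_count_measure)
    then show ?thesis
      by (simp add: C.emeasure_eq_measure ennreal_mult'[symmetric])
  qed
  moreover have "Sigma Y I = (\<Union>y\<in>Y. {y} \<times> I y)" by auto
  moreover have "measure (coord_space q) (\<Union>y\<in>Y. {y} \<times> I y) = (\<Sum>y\<in>Y. measure (coord_space q) ({y} \<times> I y))"
    using Y I finite_subset[OF Y]
    by (intro measure_finite_Union) (auto simp: disjoint_family_on_def sets_coord_space intro!: pair_measureI)
  ultimately show ?thesis by (simp add: sum_divide_distrib)
qed

definition seed_cylinder :: "nat \<Rightarrow> nat \<Rightarrow> (nat \<Rightarrow> (nat \<times> real) set) \<Rightarrow> seed set" where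
  "seed_cylinder q n S = {r \<in> space (seed_space q). \<forall>k<n. r k \<in> S k}"

lemma seed_cylinder_eq_prod_emb:
  "seed_cylinder q n S = prod_emb UNIV (\<lambda>_. coord_space q) {..<n} (Pi\<^sub>E {..<n} S)"
  by (auto simp: seed_cylinder_def prod_emb_def seed_space_eq_PiM space_PiM)

lemma seed_cylinder_in_sets:
  "(\<And>k. k < n \<Longrightarrow> S k \<in> sets (coord_space q)) \<Longrightarrow> seed_cylinder q n S \<in> sets (seed_space q)"
  unfolding seed_cylinder_eq_prod_emb seed_space_eq_PiM by (intro sets_PiM_I) auto

lemma measure_seed_cylinder:
  assumes "1 \<le> q" and "\<And>k. k < n \<Longrightarrow> S k \<in> sets (coord_space q)"
  shows "measure (seed_space q) (seed_cylinder q n S) = (\<Prod>k<n. measure (coord_space q) (S k))"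
proof -
  interpret P: product_prob_space "\<lambda>_. coord_space q" UNIV
    using product_prob_space_coord_space[OF assms(1)] .
  show ?thesis unfolding seed_cylinder_eq_prod_emb seed_space_eq_PiM
    using P.measure_PiM_emb[of "{..<n}" S] assms(2) by simp
qed

lemma measurable_coord_fst [measurable]: "fst \<in> measurable (coord_space q) (count_space UNIV)"
proof -
  have "(\<lambda>x. x) \<in> measurable (uniform_count_measure {1..q}) (count_space UNIV)"
    by (subst measurable_cong_sets[OF sets_uniform_count_measure_count_space refl])
       (rule measurable_count_space)
  then show ?thesis unfolding coord_space_def by (rule measurable_compose[OF measurable_fst])
qed

lemma measurable_coord_snd [measurable]: "snd \<in> borel_measurable (coord_space q)"
proof -
  have "(\<lambda>x. x) \<in> borel_measurable (uniform_measure lborel {0..1::real})"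
    by (rule measurable_ident_sets) simp
  then show ?thesis unfolding coord_space_def by (rule measurable_compose[OF measurable_snd])
qed

lemma measurable_seed_component [measurable]: "(\<lambda>r. r k) \<in> measurable (seed_space q) (coord_space q)"
  unfolding seed_space_eq_PiM by (rule measurable_component_singleton) simp

lemma measurable_istar [measurable]: "istar \<nu> \<in> measurable (seed_space q) (count_space UNIV)"
  unfolding istar_def by measurable

lemma measurable_accepted_sample [measurable]:
  "(\<lambda>r. r (istar \<nu> r)) \<in> measurable (seed_space q) (coord_space q)"
  by (rule measurable_compose_countable'[where I=UNIV]) auto

lemma measurable_MinCoupler [measurable]: "MinCoupler \<nu> \<in> measurable (seed_space q) (count_space UNIV)"
  unfolding MinCoupler_def by measurable

lemma Rset_in_sets: "Rset \<mu> \<delta> \<inter> space (seed_space q) \<in> sets (seed_space q)"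
proof -
  have "Rset \<mu> \<delta> \<inter> space (seed_space q) =
      {r \<in> space (seed_space q). (1 - \<delta>) * \<mu> (fst (r (istar \<mu> r))) \<le> snd (r (istar \<mu> r))}"
    by (auto simp: Rset_def)
  also have "\<dots> \<in> sets (seed_space q)" by measurable
  finally show ?thesis .
qed

lemma in_simplex_nonneg: "in_simplex q \<nu> \<Longrightarrow> y \<in> {1..q} \<Longrightarrow> 0 \<le> \<nu> y"
  by (simp add: in_simplex_def)

lemma in_simplex_le_one: "in_simplex q \<nu> \<Longrightarrow> y \<in> {1..q} \<Longrightarrow> \<nu> y \<le> 1"
  using member_le_sum[of y "{1..q}" \<nu>] by (auto simp: in_simplex_def)

lemma in_simplex_sum: "in_simplex q \<nu> \<Longrightarrow> (\<Sum>y\<in>{1..q}. \<nu> y) = 1"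
  by (simp add: in_simplex_def)

lemma in_simplex_imp_one_le: "in_simplex q \<nu> \<Longrightarrow> 1 \<le> q"
  by (cases q) (auto simp: in_simplex_def)

lemma measure_unit_Int_greaterThan: "0 \<le> a \<Longrightarrow> a \<le> 1 \<Longrightarrow> measure lborel ({0..1} \<inter> {a<..}) = 1 - (a::real)"
  by (subgoal_tac "{0..1} \<inter> {a<..} = {a<..1}") auto

lemma measure_unit_Int_atMost: "0 \<le> b \<Longrightarrow> b \<le> 1 \<Longrightarrow> measure lborel ({0..1} \<inter> {..b}) = (b::real)"
  by (subgoal_tac "{0..1} \<inter> {..b} = {0..b}") auto

lemma measure_unit_Int_atLeastAtMost:
  "0 \<le> a \<Longrightarrow> a \<le> b \<Longrightarrow> b \<le> 1 \<Longrightarrow> measure lborel ({0..1} \<inter> {a..b}) = b - (a::real)"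
  by (subgoal_tac "{0..1} \<inter> {a..b} = {a..b}") auto

lemma mem_Sigma_iff_fst_snd: "z \<in> Sigma A B \<longleftrightarrow> fst z \<in> A \<and> snd z \<in> B (fst z)"
  by (cases z) auto

definition reject_set :: "nat \<Rightarrow> (nat \<Rightarrow> real) \<Rightarrow> (nat \<times> real) set" where
  "reject_set q \<nu> = (SIGMA y:{1..q}. {\<nu> y<..})"

definition accept_set :: "(nat \<Rightarrow> real) \<Rightarrow> nat set \<Rightarrow> (nat \<times> real) set" where
  "accept_set \<nu> Y = (SIGMA y:Y. {..\<nu> y})"

definition band_set :: "(nat \<Rightarrow> real) \<Rightarrow> real \<Rightarrow> nat set \<Rightarrow> (nat \<times> real) set" where
  "band_set \<mu> \<delta> Y = (SIGMA y:Y. {(1 - \<delta>) * \<mu> y..\<mu> y})"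

lemma reject_set_in_sets: "reject_set q \<nu> \<in> sets (coord_space q)"
  unfolding reject_set_def by (rule Sigma_in_sets_coord_space) auto

lemma accept_set_in_sets: "Y \<subseteq> {1..q} \<Longrightarrow> accept_set \<nu> Y \<in> sets (coord_space q)"
  unfolding accept_set_def by (rule Sigma_in_sets_coord_space) auto

lemma band_set_in_sets: "Y \<subseteq> {1..q} \<Longrightarrow> band_set \<mu> \<delta> Y \<in> sets (coord_space q)"
  unfolding band_set_def by (rule Sigma_in_sets_coord_space) auto

lemma measure_reject_set:
  assumes "1 \<le> q" and "\<And>y. y \<in> {1..q} \<Longrightarrow> 0 \<le> \<nu> y \<and> \<nu> y \<le> 1"
  shows "measure (coord_space q) (reject_set q \<nu>) = 1 - (\<Sum>y\<in>{1..q}. \<nu> y) / q"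
proof -
  have "measure (coord_space q) (reject_set q \<nu>) = (\<Sum>y\<in>{1..q}. 1 - \<nu> y) / q"
    unfolding reject_set_def using assms
    by (subst measure_coord_space_Sigma) (auto intro!: sum.cong measure_unit_Int_greaterThan)
  then show ?thesis using assms(1) by (simp add: sum_subtractf diff_divide_distrib)
qed

lemma measure_reject_set_simplex:
  assumes "in_simplex q \<nu>"
  shows "measure (coord_space q) (reject_set q \<nu>) = 1 - 1 / q"
  using measure_reject_set[OF in_simplex_imp_one_le[OF assms], of \<nu>] in_simplex_sum[OF assms]
    in_simplex_nonneg[OF assms] in_simplex_le_one[OF assms]
  by simp

lemma measure_accept_set:
  assumes "1 \<le> q" "Y \<subseteq> {1..q}" and "\<And>y. y \<in> Y \<Longrightarrow> 0 \<le> \<nu> y \<and> \<nu> y \<le> 1"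
  shows "measure (coord_space q) (accept_set \<nu> Y) = (\<Sum>y\<in>Y. \<nu> y) / q"
  unfolding accept_set_def using assms
  by (subst measure_coord_space_Sigma) (auto intro!: sum.cong measure_unit_Int_atMost)

lemma measure_band_set:
  assumes "1 \<le> q" "Y \<subseteq> {1..q}" "0 \<le> \<delta>" "\<delta> \<le> 1" and "\<And>y. y \<in> Y \<Longrightarrow> 0 \<le> \<mu> y \<and> \<mu> y \<le> 1"
  shows "measure (coord_space q) (band_set \<mu> \<delta> Y) = \<delta> * (\<Sum>y\<in>Y. \<mu> y) / q"
proof -
  have "measure lborel ({0..1} \<inter> {(1 - \<delta>) * \<mu> y..\<mu> y}) = \<delta> * \<mu> y" if "y \<in> Y" for y
    using assms that mult_left_le_one_le[of "\<mu> y" \<delta>]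
    by (subst measure_unit_Int_atLeastAtMost) (auto simp: algebra_simps)
  then have "measure (coord_space q) (band_set \<mu> \<delta> Y) = (\<Sum>y\<in>Y. \<delta> * \<mu> y) / q"
    unfolding band_set_def using assms by (subst measure_coord_space_Sigma) auto
  then show ?thesis by (simp add: sum_distrib_left)
qed

locale band_setting =
  fixes q :: nat and \<mu> :: "nat \<Rightarrow> real" and \<delta> :: real
  assumes mu_simplex: "in_simplex q \<mu>" and delta_pos: "0 < \<delta>" and delta_le_one: "\<delta> \<le> 1"
begin

lemma q_pos: "1 \<le> q"
  using in_simplex_imp_one_le[OF mu_simplex] .

lemma prob_space_seed: "prob_space (seed_space q)"
  using prob_space_seed_space[OF q_pos] .

lemma measure_band_set_mu:
  "Y \<subseteq> {1..q} \<Longrightarrow> measure (coord_space q) (band_set \<mu> \<delta> Y) = \<delta> * (\<Sum>y\<in>Y. \<mu> y) / q"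
  using q_pos delta_pos delta_le_one in_simplex_nonneg[OF mu_simplex] in_simplex_le_one[OF mu_simplex]
  by (intro measure_band_set) auto

definition first_accept_in_band :: "nat \<Rightarrow> seed set" where
  "first_accept_in_band i =
     seed_cylinder q (Suc i) (\<lambda>k. if k < i then reject_set q \<mu> else band_set \<mu> \<delta> {1..q})"

definition rejected_upto :: "nat \<Rightarrow> seed set" where
  "rejected_upto M = seed_cylinder q M (\<lambda>_. reject_set q \<mu>)"

lemma measure_first_accept_in_band:
  "measure (seed_space q) (first_accept_in_band i) = (1 - 1 / q) ^ i * (\<delta> / q)"
  unfolding first_accept_in_band_def using q_pos in_simplex_sum[OF mu_simplex]
  by (subst measure_seed_cylinder)
     (auto simp: reject_set_in_sets band_set_in_sets measure_reject_set_simplex[OF mu_simplex]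
        measure_band_set_mu)

lemma measure_rejected_upto: "measure (seed_space q) (rejected_upto M) = (1 - 1 / q) ^ M"
  unfolding rejected_upto_def using q_pos
  by (subst measure_seed_cylinder) (auto simp: reject_set_in_sets measure_reject_set_simplex[OF mu_simplex])

lemma Rset_subset_first_accept_in_band:
  "Rset \<mu> \<delta> \<inter> space (seed_space q) \<subseteq> (\<Union>i<M. first_accept_in_band i) \<union> rejected_upto M"
proof
  fix r assume r: "r \<in> Rset \<mu> \<delta> \<inter> space (seed_space q)"
  then have sp: "r \<in> space (seed_space q)" by auto
  show "r \<in> (\<Union>i<M. first_accept_in_band i) \<union> rejected_upto M"
  proof (cases "\<exists>k<M. snd (r k) \<le> \<mu> (fst (r k))")
    case True
    then obtain k where k: "k < M" "snd (r k) \<le> \<mu> (fst (r k))" by auto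
    define i where "i = istar \<mu> r"
    have "i \<le> k" unfolding i_def istar_def by (rule Least_le) (rule k(2))
    have accept: "snd (r i) \<le> \<mu> (fst (r i))" unfolding i_def istar_def by (rule LeastI) (rule k(2))
    have reject: "\<mu> (fst (r k')) < snd (r k')" if "k' < i" for k'
      using not_less_Least[of k' "\<lambda>k. snd (r k) \<le> \<mu> (fst (r k))"] that
      unfolding i_def istar_def by auto
    have "(1 - \<delta>) * \<mu> (fst (r i)) \<le> snd (r i)" using r unfolding Rset_def i_def by auto
    then have "r \<in> first_accept_in_band i"
      using sp accept reject fst_seed_in_range[OF sp]
      by (auto simp: first_accept_in_band_def seed_cylinder_def reject_set_def band_set_def
          mem_Sigma_iff_fst_snd less_Suc_eq)
    then show ?thesis using \<open>i \<le> k\<close> k(1) by auto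
  next
    case False
    then have "r \<in> rejected_upto M"
      using sp fst_seed_in_range[OF sp]
      by (auto simp: rejected_upto_def seed_cylinder_def reject_set_def mem_Sigma_iff_fst_snd not_le)
    then show ?thesis by auto
  qed
qed

lemma measure_Rset_le: "measure (seed_space q) (Rset \<mu> \<delta> \<inter> space (seed_space q)) \<le> \<delta>"
proof -
  interpret P: prob_space "seed_space q" by (rule prob_space_seed)
  define c where "c = 1 - 1 / real q"
  have c: "0 \<le> c" "c < 1" "1 - c = 1 / q" using q_pos by (auto simp: c_def field_simps)
  have sets: "first_accept_in_band i \<in> sets (seed_space q)" "rejected_upto M \<in> sets (seed_space q)" for i M
    by (auto simp: first_accept_in_band_def rejected_upto_def reject_set_in_sets band_set_in_sets
        intro!: seed_cylinder_in_sets)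
  have bound: "measure (seed_space q) (Rset \<mu> \<delta> \<inter> space (seed_space q)) \<le> \<delta> + c ^ M" for M
  proof -
    have "measure (seed_space q) (Rset \<mu> \<delta> \<inter> space (seed_space q))
        \<le> measure (seed_space q) ((\<Union>i<M. first_accept_in_band i) \<union> rejected_upto M)"
      using sets by (intro P.finite_measure_mono[OF Rset_subset_first_accept_in_band]) auto
    also have "\<dots> \<le> (\<Sum>i<M. measure (seed_space q) (first_accept_in_band i)) + measure (seed_space q) (rejected_upto M)"
      using sets measure_UNION_le[of "{..<M}" first_accept_in_band "seed_space q"]
        measure_Un_le[of "\<Union>i<M. first_accept_in_band i" "seed_space q" "rejected_upto M"]
      by auto
    also have "\<dots> = (\<Sum>i<M. c ^ i) * (1 - c) * \<delta> + c ^ M"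
      by (simp add: measure_first_accept_in_band measure_rejected_upto c(3) sum_distrib_right
          sum_divide_distrib c_def)
    also have "\<dots> = (1 - c ^ M) * \<delta> + c ^ M"
      using c q_pos by (simp add: sum_gp_strict)
    also have "\<dots> \<le> \<delta> + c ^ M"
      using c delta_pos by (simp add: algebra_simps)
    finally show ?thesis .
  qed
  have "(\<lambda>M. \<delta> + c ^ M) \<longlonglongrightarrow> \<delta> + 0"
    using c by (intro tendsto_add tendsto_const LIMSEQ_power_zero) auto
  then show ?thesis using bound by (intro LIMSEQ_le_const) auto
qed

end

lemma prod_lessThan_add: "(\<Prod>k<a + b. f k) = (\<Prod>k<a. f k) * (\<Prod>k<b. f (a + k :: nat))"
  by (induction b) (auto simp: mult.assoc)

lemma ratio_lower_bound:
  fixes a b c \<delta> :: real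
  assumes "0 < \<delta>" "0 \<le> a" "\<delta> * c \<le> a" "a \<le> b" "b \<le> \<delta>"
  shows "c \<le> a / b"
proof (cases "b = 0")
  case True
  with assms have "\<delta> * c \<le> 0" by simp
  with assms(1) True show ?thesis by (simp add: mult_le_0_iff)
next
  case False
  with assms have "0 < b" by simp
  have "c \<le> a / \<delta>" using assms(1,3) by (simp add: field_simps)
  also have "\<dots> \<le> a / b" using assms \<open>0 < b\<close> by (intro divide_left_mono) auto
  finally show ?thesis .
qed

locale coupling_pair = band_setting +
  fixes \<upsilon> :: "nat \<Rightarrow> real"
  assumes nu_simplex: "in_simplex q \<upsilon>"
begin

definition mass_max :: real where
  "mass_max = (\<Sum>y\<in>{1..q}. max (\<mu> y) (\<upsilon> y))"

lemma mass_max_bounds: "1 \<le> mass_max" "mass_max \<le> 2"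
proof -
  have "(\<Sum>y\<in>{1..q}. \<mu> y) \<le> mass_max" unfolding mass_max_def by (rule sum_mono) auto
  then show "1 \<le> mass_max" using in_simplex_sum[OF mu_simplex] by simp
  have "mass_max \<le> (\<Sum>y\<in>{1..q}. \<mu> y + \<upsilon> y)" unfolding mass_max_def
    by (rule sum_mono) (use in_simplex_nonneg[OF mu_simplex] in_simplex_nonneg[OF nu_simplex] in fastforce)
  then show "mass_max \<le> 2"
    using in_simplex_sum[OF mu_simplex] in_simplex_sum[OF nu_simplex] by (simp add: sum.distrib)
qed

definition deficient :: "nat set" where
  "deficient = {x \<in> {1..q}. \<upsilon> x < (1 - \<delta>) * \<mu> x}"

definition disagreement_in_Rset :: "seed set" where
  "disagreement_in_Rset = {r. MinCoupler \<mu> r \<noteq> MinCoupler \<upsilon> r} \<inter> Rset \<mu> \<delta> \<inter> space (seed_space q)"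

lemma disagreement_in_Rset_in_sets: "disagreement_in_Rset \<in> sets (seed_space q)"
proof -
  have "disagreement_in_Rset = {r \<in> space (seed_space q). MinCoupler \<mu> r \<noteq> MinCoupler \<upsilon> r}
      \<inter> (Rset \<mu> \<delta> \<inter> space (seed_space q))"
    unfolding disagreement_in_Rset_def by blast
  also have "\<dots> \<in> sets (seed_space q)"
    using Rset_in_sets by measurable
  finally show ?thesis .
qed

definition witness_event :: "nat \<Rightarrow> nat \<Rightarrow> nat \<Rightarrow> seed set" where
  "witness_event x i d = seed_cylinder q (i + d + 2) (\<lambda>k.
     if k < i then reject_set q (\<lambda>y. max (\<mu> y) (\<upsilon> y))
     else if k = i then band_set \<mu> \<delta> {x}
     else if k \<le> i + d then reject_set q \<upsilon>
     else accept_set \<upsilon> ({1..q} - {x}))"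

lemma witness_event_istar:
  assumes x: "x \<in> deficient" and r: "r \<in> witness_event x i d"
  shows "istar \<mu> r = i" "fst (r i) = x" "istar \<upsilon> r = Suc (i + d)" "fst (r (Suc (i + d))) \<noteq> x"
proof -
  have rk: "r k \<in> (if k < i then reject_set q (\<lambda>y. max (\<mu> y) (\<upsilon> y))
      else if k = i then band_set \<mu> \<delta> {x} else if k \<le> i + d then reject_set q \<upsilon>
      else accept_set \<upsilon> ({1..q} - {x}))" if "k < i + d + 2" for k
    using r that by (auto simp: witness_event_def seed_cylinder_def)
  have both_reject: "\<mu> (fst (r k)) < snd (r k) \<and> \<upsilon> (fst (r k)) < snd (r k)" if "k < i" for k
    using rk[of k] that by (auto simp: reject_set_def mem_Sigma_iff_fst_snd)
  have band: "fst (r i) = x" "(1 - \<delta>) * \<mu> x \<le> snd (r i)" "snd (r i) \<le> \<mu> x"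
    using rk[of i] by (auto simp: band_set_def mem_Sigma_iff_fst_snd)
  have nu_reject: "\<upsilon> (fst (r k)) < snd (r k)" if "i < k" "k \<le> i + d" for k
    using rk[of k] that by (auto simp: reject_set_def mem_Sigma_iff_fst_snd)
  have nu_accept: "fst (r (Suc (i + d))) \<noteq> x" "snd (r (Suc (i + d))) \<le> \<upsilon> (fst (r (Suc (i + d))))"
    using rk[of "Suc (i + d)"] by (auto simp: accept_set_def mem_Sigma_iff_fst_snd)
  show "istar \<mu> r = i" unfolding istar_def
    by (rule Least_equality) (use band both_reject in \<open>auto simp: not_le[symmetric]\<close>)
  show "fst (r i) = x" "fst (r (Suc (i + d))) \<noteq> x" using band nu_accept by auto
  have "\<upsilon> (fst (r k)) < snd (r k)" if k: "k < Suc (i + d)" for k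
  proof -
    consider "k < i" | "k = i" | "i < k" "k \<le> i + d" using k by linarith
    then show ?thesis
      using both_reject band nu_reject x by cases (auto simp: deficient_def)
  qed
  then show "istar \<upsilon> r = Suc (i + d)" unfolding istar_def
    by (intro Least_equality nu_accept(2)) (meson leI not_less)
qed

lemma witness_event_subset:
  assumes x: "x \<in> deficient"
  shows "witness_event x i d \<subseteq> disagreement_in_Rset"
proof
  fix r assume r: "r \<in> witness_event x i d"
  note istar = witness_event_istar[OF x r]
  have "r \<in> space (seed_space q)" "r i \<in> band_set \<mu> \<delta> {x}"
    using r by (auto simp: witness_event_def seed_cylinder_def dest!: spec[of _ i])
  then show "r \<in> disagreement_in_Rset"
    using istar by (auto simp: disagreement_in_Rset_def MinCoupler_def Rset_def band_set_def
        mem_Sigma_iff_fst_snd)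
qed

lemma measure_reject_both:
  "measure (coord_space q) (reject_set q (\<lambda>y. max (\<mu> y) (\<upsilon> y))) = 1 - mass_max / q"
  unfolding mass_max_def using q_pos in_simplex_nonneg[OF mu_simplex] in_simplex_nonneg[OF nu_simplex]
    in_simplex_le_one[OF mu_simplex] in_simplex_le_one[OF nu_simplex]
  by (intro measure_reject_set) (auto simp: le_max_iff_disj)

lemma measure_witness_event:
  assumes x: "x \<in> {1..q}"
  shows "measure (seed_space q) (witness_event x i d)
    = (1 - mass_max / q) ^ i * (\<delta> * \<mu> x / q) * (1 - 1 / q) ^ d * ((1 - \<upsilon> x) / q)"
proof -
  define S where "S k = (if k < i then reject_set q (\<lambda>y. max (\<mu> y) (\<upsilon> y))
     else if k = i then band_set \<mu> \<delta> {x} else if k \<le> i + d then reject_set q \<upsilon>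
     else accept_set \<upsilon> ({1..q} - {x}))" for k
  define f where "f k = measure (coord_space q) (S k)" for k
  have "measure (seed_space q) (witness_event x i d) = (\<Prod>k<i + (d + 2). f k)"
    unfolding witness_event_def S_def[symmetric] f_def using q_pos x
    by (subst measure_seed_cylinder)
       (auto simp: S_def reject_set_in_sets band_set_in_sets accept_set_in_sets)
  also have "\<dots> = (\<Prod>k<i. f k) * (f i * (\<Prod>k<d. f (Suc (i + k))) * f (Suc (i + d)))"
    unfolding prod_lessThan_add add_2_eq_Suc' by (subst prod.lessThan_Suc, subst prod.lessThan_Suc_shift) simp
  also have "(\<Prod>k<i. f k) = (1 - mass_max / q) ^ i"
    by (simp add: f_def S_def measure_reject_both)
  also have "f i = \<delta> * \<mu> x / q"
    using x by (simp add: f_def S_def measure_band_set_mu)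
  also have "(\<Prod>k<d. f (Suc (i + k))) = (1 - 1 / q) ^ d"
    by (simp add: f_def S_def measure_reject_set_simplex[OF nu_simplex])
  also have "f (Suc (i + d)) = (1 - \<upsilon> x) / q"
  proof -
    have "f (Suc (i + d)) = measure (coord_space q) (accept_set \<upsilon> ({1..q} - {x}))"
      by (simp add: f_def S_def)
    also have "\<dots> = (\<Sum>y\<in>{1..q} - {x}. \<upsilon> y) / q"
      using q_pos in_simplex_nonneg[OF nu_simplex] in_simplex_le_one[OF nu_simplex]
      by (intro measure_accept_set) auto
    finally show ?thesis using x in_simplex_sum[OF nu_simplex] by (simp add: sum_diff1)
  qed
  finally show ?thesis by (simp add: mult_ac)
qed

lemma witness_events_disjoint:
  "disjoint_family_on (\<lambda>(x, i, d). witness_event x i d) (deficient \<times> UNIV)"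
proof -
  have "(x, i, d) = (x', i', d')"
    if "x \<in> deficient" "x' \<in> deficient" "r \<in> witness_event x i d" "r \<in> witness_event x' i' d'"
    for x i d x' i' d' r
    using witness_event_istar[OF that(1,3)] witness_event_istar[OF that(2,4)] by auto
  then show ?thesis unfolding disjoint_family_on_def by fastforce
qed

lemma measure_disagreement_in_Rset_ge_partial:
  "(\<Sum>x\<in>deficient. \<delta> * \<mu> x * (1 - \<upsilon> x)) / q\<^sup>2 * (\<Sum>i<N. (1 - mass_max / q) ^ i) * (\<Sum>d<N. (1 - 1 / q) ^ d)
     \<le> measure (seed_space q) disagreement_in_Rset"
proof -
  interpret P: prob_space "seed_space q" by (rule prob_space_seed)
  let ?I = "deficient \<times> {..<N} \<times> {..<N}"
  let ?W = "\<lambda>(x, i, d). witness_event x i d"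
  have deficient: "finite deficient" "deficient \<subseteq> {1..q}" by (auto simp: deficient_def)
  have "measure (seed_space q) (\<Union>p\<in>?I. ?W p) = (\<Sum>p\<in>?I. measure (seed_space q) (?W p))"
  proof (rule measure_finite_Union)
    show "disjoint_family_on ?W ?I"
      by (rule disjoint_family_on_mono[OF _ witness_events_disjoint]) auto
    show "?W ` ?I \<subseteq> sets (seed_space q)"
      using deficient(2) by (auto simp: witness_event_def reject_set_in_sets band_set_in_sets
          accept_set_in_sets intro!: seed_cylinder_in_sets)
  qed (use deficient in auto)
  also have "\<dots> = (\<Sum>(x, i, d)\<in>?I. (1 - mass_max / q) ^ i * (\<delta> * \<mu> x / q) * (1 - 1 / q) ^ d * ((1 - \<upsilon> x) / q))"
    using deficient(2) by (intro sum.cong) (auto simp: measure_witness_event)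
  also have "\<dots> = (\<Sum>x\<in>deficient. \<delta> * \<mu> x * (1 - \<upsilon> x)) / q\<^sup>2
      * (\<Sum>i<N. (1 - mass_max / q) ^ i) * (\<Sum>d<N. (1 - 1 / q) ^ d)"
    by (simp add: sum.cartesian_product[symmetric] sum_product sum_distrib_left sum_distrib_right
        sum_divide_distrib power2_eq_square mult_ac)
  finally have "measure (seed_space q) (\<Union>p\<in>?I. ?W p) = \<dots>" .
  moreover have "measure (seed_space q) (\<Union>p\<in>?I. ?W p) \<le> measure (seed_space q) disagreement_in_Rset"
    using witness_event_subset disagreement_in_Rset_in_sets by (auto intro!: P.finite_measure_mono)
  ultimately show ?thesis by simp
qed

lemma measure_disagreement_in_Rset_ge:
  "\<delta> * (\<Sum>x\<in>deficient. \<mu> x * (1 - \<upsilon> x)) / 2 \<le> measure (seed_space q) disagreement_in_Rset"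
proof -
  define T where "T = (\<Sum>x\<in>deficient. \<delta> * \<mu> x * (1 - \<upsilon> x))"
  define b where "b = 1 - mass_max / q"
  define c where "c = 1 - 1 / real q"
  have "mass_max \<le> q"
    unfolding mass_max_def
    using sum_bounded_above[of "{1..q}" "\<lambda>y. max (\<mu> y) (\<upsilon> y)" 1]
      in_simplex_le_one[OF mu_simplex] in_simplex_le_one[OF nu_simplex] by auto
  then have b: "0 \<le> b" "b < 1" "1 - b = mass_max / q"
    using mass_max_bounds q_pos by (auto simp: b_def field_simps)
  have c: "0 \<le> c" "c < 1" "1 - c = 1 / q" using q_pos by (auto simp: c_def field_simps)
  have T: "0 \<le> T" unfolding T_def using delta_pos
    by (intro sum_nonneg mult_nonneg_nonneg)
       (auto simp: deficient_def in_simplex_nonneg[OF mu_simplex] in_simplex_le_one[OF nu_simplex])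
  have "(\<lambda>N. T / q\<^sup>2 * (\<Sum>i<N. b ^ i) * (\<Sum>d<N. c ^ d)) \<longlonglongrightarrow> T / q\<^sup>2 * (1 / (1 - b)) * (1 / (1 - c))"
    using geometric_sums[of b] geometric_sums[of c] b c
    by (intro tendsto_mult tendsto_const) (auto simp: sums_def)
  moreover have "T / q\<^sup>2 * (1 / (1 - b)) * (1 / (1 - c)) = T / mass_max"
    unfolding b(3) c(3) using q_pos mass_max_bounds by (simp add: field_simps power2_eq_square)
  ultimately have "T / mass_max \<le> measure (seed_space q) disagreement_in_Rset"
    using measure_disagreement_in_Rset_ge_partial
    by (intro LIMSEQ_le_const2[of "\<lambda>N. T / q\<^sup>2 * (\<Sum>i<N. b ^ i) * (\<Sum>d<N. c ^ d)"])
       (auto simp: T_def b_def c_def)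
  moreover have "T / 2 \<le> T / mass_max" using T mass_max_bounds by (intro divide_left_mono) auto
  moreover have "T = \<delta> * (\<Sum>x\<in>deficient. \<mu> x * (1 - \<upsilon> x))"
    by (simp add: T_def sum_distrib_left mult.assoc)
  ultimately show ?thesis by linarith
qed

lemma cond_prob_disagreement_ge:
  "(\<Sum>x\<in>deficient. \<mu> x * (1 - \<upsilon> x)) / 2
     \<le> cond_prob (seed_space q) {r. MinCoupler \<mu> r \<noteq> MinCoupler \<upsilon> r} (Rset \<mu> \<delta>)"
proof -
  interpret P: prob_space "seed_space q" by (rule prob_space_seed)
  have "measure (seed_space q) disagreement_in_Rset \<le> measure (seed_space q) (Rset \<mu> \<delta> \<inter> space (seed_space q))"
    using Rset_in_sets by (intro P.finite_measure_mono) (auto simp: disagreement_in_Rset_def)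
  then show ?thesis
    unfolding cond_prob_def disagreement_in_Rset_def[symmetric]
    using measure_disagreement_in_Rset_ge measure_Rset_le delta_pos
    by (intro ratio_lower_bound[of \<delta>]) auto
qed

end

theorem lemma6p2:
  fixes q :: nat and \<mu> \<upsilon> :: "nat \<Rightarrow> real" and \<delta> :: real
  assumes "in_simplex q \<mu>" and "in_simplex q \<upsilon>"
    and "0 < \<delta>" and "\<delta> \<le> 1"
  shows "cond_prob (seed_space q) {r. MinCoupler \<mu> r \<noteq> MinCoupler \<upsilon> r} (Rset \<mu> \<delta>)
         \<ge> (1 - Max (\<upsilon> ` {1..q})) / 2 * (\<Sum>x\<in>{x\<in>{1..q}. \<upsilon> x < (1 - \<delta>) * \<mu> x}. \<mu> x)"
proof -
  interpret coupling_pair q \<mu> \<delta> \<upsilon>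
    using assms by unfold_locales
  have "\<upsilon> x \<le> Max (\<upsilon> ` {1..q})" if "x \<in> deficient" for x
    using that by (intro Max_ge) (auto simp: deficient_def)
  then have "(1 - Max (\<upsilon> ` {1..q})) * (\<Sum>x\<in>deficient. \<mu> x) \<le> (\<Sum>x\<in>deficient. \<mu> x * (1 - \<upsilon> x))"
    unfolding sum_distrib_left
    by (intro sum_mono) (auto simp: deficient_def mult.commute in_simplex_nonneg[OF assms(1)] intro!: mult_left_mono)
  then show ?thesis
    using cond_prob_disagreement_ge unfolding deficient_def by simp
qed

end
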